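(* Let $D$ be an integral domain. Then, the closure of the set of semilocal Pr\"ufer overrings of $D$ in the constructible topology of the space of all overrings of $D$ is the set of integrally closed overrings of $D$.
   Context: Let $D$ be an integral domain with quotient field $K$. The set of all overrings of $D$ (rings $R$ with $D\subseteq R\subseteq K$) carries the Zariski topology, whose basic open sets are $\{R \mid F\subseteq R\}$ for $F$ ranging among finite subsets of $K$; it is a spectral space. The constructible topology on a spectral space is the coarsest topology for which all open and quasi-compact subsets are clopen. *)

theory Defs
  imports "HOL-Analysis.Analysis" "HOL-Computational_Algebra.Polynomial"
begin

text \<open>The ambient field K is a type 'a of class field. A subring of K is a subset
containing 0, 1 and closed under addition, negation and multiplication.\<close>

definition is_subring :: "'a::field set \<Rightarrow> bool" where
  "is_subring R \<longleftrightarrow> 0 \<in> R \<and> 1 \<in> R \<and>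
     (\<forall>x\<in>R. \<forall>y\<in>R. x + y \<in> R \<and> x * y \<in> R) \<and> (\<forall>x\<in>R. - x \<in> R)"

definition is_quotient_field_of :: "'a::field set \<Rightarrow> bool" where
  "is_quotient_field_of D \<longleftrightarrow> (\<forall>x::'a. \<exists>a\<in>D. \<exists>b\<in>D. b \<noteq> 0 \<and> x = a / b)"

definition overrings :: "'a::field set \<Rightarrow> 'a set set" where
  "overrings D = {R. is_subring R \<and> D \<subseteq> R}"

definition is_ideal_of :: "'a::field set \<Rightarrow> 'a set \<Rightarrow> bool" where
  "is_ideal_of R I \<longleftrightarrow> I \<subseteq> R \<and> 0 \<in> I \<and> (\<forall>x\<in>I. \<forall>y\<in>I. x + y \<in> I) \<and>
     (\<forall>r\<in>R. \<forall>x\<in>I. r * x \<in> I)"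

definition is_maximal_ideal_of :: "'a::field set \<Rightarrow> 'a set \<Rightarrow> bool" where
  "is_maximal_ideal_of R M \<longleftrightarrow> is_ideal_of R M \<and> M \<noteq> R \<and>
     (\<forall>J. is_ideal_of R J \<and> M \<subseteq> J \<and> J \<noteq> R \<longrightarrow> J = M)"

definition localization_at :: "'a::field set \<Rightarrow> 'a set \<Rightarrow> 'a set" where
  "localization_at R M = {a / s | a s. a \<in> R \<and> s \<in> R \<and> s \<notin> M}"

definition is_valuation_ring :: "'a::field set \<Rightarrow> bool" where
  "is_valuation_ring V \<longleftrightarrow> is_subring V \<and> (\<forall>x. x \<noteq> 0 \<longrightarrow> x \<in> V \<or> inverse x \<in> V)"

definition is_pruefer :: "'a::field set \<Rightarrow> bool" where
  "is_pruefer R \<longleftrightarrow> is_subring R \<and>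
     (\<forall>M. is_maximal_ideal_of R M \<longrightarrow> is_valuation_ring (localization_at R M))"

definition is_semilocal :: "'a::field set \<Rightarrow> bool" where
  "is_semilocal R \<longleftrightarrow> finite {M. is_maximal_ideal_of R M}"

definition is_integrally_closed :: "'a::field set \<Rightarrow> bool" where
  "is_integrally_closed R \<longleftrightarrow>
     (\<forall>p::'a poly. \<forall>x. lead_coeff p = 1 \<and> (\<forall>i. coeff p i \<in> R) \<and> poly p x = 0 \<longrightarrow> x \<in> R)"

definition zariski_overrings :: "'a::field set \<Rightarrow> 'a set topology" where
  "zariski_overrings D =
     topology_generated_by {{R \<in> overrings D. F \<subseteq> R} | F. finite F}"

text \<open>Constructible topology: coarsest topology on the space in which every open and
quasi-compact set of the Zariski topology is clopen, i.e. generated by these sets and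
their complements.\<close>

definition constructible_overrings :: "'a::field set \<Rightarrow> 'a set topology" where
  "constructible_overrings D =
     topology_generated_by
       ({U. openin (zariski_overrings D) U \<and> compactin (zariski_overrings D) U} \<union>
        {topspace (zariski_overrings D) - U | U.
            openin (zariski_overrings D) U \<and> compactin (zariski_overrings D) U})"

end

theory Submission
  imports Defs
begin

text \<open>Pruefer domains are integrally closed, and integral closedness of an overring \<open>R\<close> is the
  conjunction, over all monic \<open>p\<close> and roots \<open>x\<close> of \<open>p\<close>, of the conditions
  "the coefficients of \<open>p\<close> lie in \<open>R\<close> implies \<open>x \<in> R\<close>", each of which cuts out a constructibly
  clopen set. So the integrally closed overrings form a closed set containing the semilocal
  Pruefer ones.

  Conversely, a constructible neighbourhood of an integrally closed \<open>R\<close> contains a set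
  \<open>{S. F \<subseteq> S \<and> G \<inter> S = {}}\<close> with \<open>F \<subseteq> R\<close> and \<open>G\<close> finite and disjoint from \<open>R\<close>.
  For \<open>g \<in> G\<close>, integral closedness gives \<open>g \<notin> R[1/g]\<close>, and a subring maximal among those
  containing \<open>R[1/g]\<close> but not \<open>g\<close> is a valuation ring. The intersection of these finitely many
  valuation rings lies in the set and is semilocal Pruefer: by prime avoidance its maximal ideals
  are traces of the maximal ideals of the valuation rings, and its localizations are valuation
  rings by a geometric-sum argument.\<close>

section \<open>Subrings, ideals and localization\<close>

lemma is_subringD:
  assumes "is_subring R"
  shows "0 \<in> R" "1 \<in> R" "x \<in> R \<Longrightarrow> y \<in> R \<Longrightarrow> x + y \<in> R"
    "x \<in> R \<Longrightarrow> y \<in> R \<Longrightarrow> x * y \<in> R" "x \<in> R \<Longrightarrow> - x \<in> R"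
  using assms unfolding is_subring_def by auto

lemma subring_diff: "is_subring R \<Longrightarrow> x \<in> R \<Longrightarrow> y \<in> R \<Longrightarrow> x - y \<in> R"
  by (metis diff_conv_add_uminus is_subringD(3,5))

lemma subring_sum: "is_subring R \<Longrightarrow> (\<And>i. i \<in> A \<Longrightarrow> f i \<in> R) \<Longrightarrow> sum f A \<in> R"
  by (induction A rule: infinite_finite_induct) (auto intro: is_subringD)

lemma subring_prod: "is_subring R \<Longrightarrow> (\<And>i. i \<in> A \<Longrightarrow> f i \<in> R) \<Longrightarrow> prod f A \<in> R"
  by (induction A rule: infinite_finite_induct) (auto intro: is_subringD)

lemma subring_power: "is_subring R \<Longrightarrow> x \<in> R \<Longrightarrow> x ^ n \<in> R"
  by (induction n) (auto intro: is_subringD)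

lemma poly_in_subring:
  assumes "is_subring R" "\<And>i. coeff p i \<in> R" "x \<in> R"
  shows "poly p x \<in> R"
  unfolding poly_altdef using assms by (auto intro!: subring_sum is_subringD(4) subring_power)

lemma is_subring_UNIV: "is_subring UNIV"
  unfolding is_subring_def by simp

lemma subring_Inter:
  assumes "\<V> \<noteq> {}" "\<And>V. V \<in> \<V> \<Longrightarrow> is_subring V"
  shows "is_subring (\<Inter>\<V>)"
  using assms unfolding is_subring_def by blast

lemma subring_chain_Union:
  assumes "C \<noteq> {}" "\<And>B. B \<in> C \<Longrightarrow> is_subring B" "subset.chain UNIV C"
  shows "is_subring (\<Union>C)"
  unfolding is_subring_def
proof (intro conjI ballI)
  obtain B where "B \<in> C" using assms(1) by blast
  then show "0 \<in> \<Union>C" "1 \<in> \<Union>C" using assms(2) is_subringD(1,2) by blast+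
next
  fix x y assume "x \<in> \<Union>C" "y \<in> \<Union>C"
  then obtain B where "B \<in> C" "x \<in> B" "y \<in> B"
    using assms(3) unfolding subset_chain_def by blast
  then show "x + y \<in> \<Union>C" "x * y \<in> \<Union>C" using assms(2) is_subringD(3,4) by blast+
qed (use assms(2) is_subringD(5) in blast)

lemma is_ideal_ofD:
  assumes "is_ideal_of R I"
  shows "I \<subseteq> R" "0 \<in> I" "x \<in> I \<Longrightarrow> y \<in> I \<Longrightarrow> x + y \<in> I" "r \<in> R \<Longrightarrow> x \<in> I \<Longrightarrow> r * x \<in> I"
  using assms unfolding is_ideal_of_def by auto

lemma ideal_mult_right: "is_ideal_of R I \<Longrightarrow> x \<in> I \<Longrightarrow> r \<in> R \<Longrightarrow> x * r \<in> I"
  by (metis is_ideal_ofD(4) mult.commute)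

lemma ideal_uminus: "is_subring R \<Longrightarrow> is_ideal_of R I \<Longrightarrow> x \<in> I \<Longrightarrow> - x \<in> I"
  by (metis is_ideal_ofD(4) is_subringD(2,5) mult_minus1)

lemma ideal_diff: "is_subring R \<Longrightarrow> is_ideal_of R I \<Longrightarrow> x \<in> I \<Longrightarrow> y \<in> I \<Longrightarrow> x - y \<in> I"
  by (metis diff_conv_add_uminus ideal_uminus is_ideal_ofD(3))

lemma ideal_sum: "is_ideal_of R I \<Longrightarrow> (\<And>i. i \<in> A \<Longrightarrow> f i \<in> I) \<Longrightarrow> sum f A \<in> I"
  by (induction A rule: infinite_finite_induct) (auto intro: is_ideal_ofD)

lemma ideal_eq_if_one_mem:
  assumes "is_ideal_of R I" "1 \<in> I"
  shows "I = R"
proof -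
  have "r \<in> I" if "r \<in> R" for r using is_ideal_ofD(4)[OF assms(1) that assms(2)] by simp
  then show ?thesis using is_ideal_ofD(1)[OF assms(1)] by blast
qed

lemma maximal_ideal_one_notin:
  assumes "is_maximal_ideal_of R M"
  shows "1 \<notin> M"
  using assms ideal_eq_if_one_mem unfolding is_maximal_ideal_of_def by blast

lemma ideal_chain_Union:
  assumes "C \<noteq> {}" "\<And>I. I \<in> C \<Longrightarrow> is_ideal_of R I" "subset.chain UNIV C"
  shows "is_ideal_of R (\<Union>C)"
  unfolding is_ideal_of_def
proof (intro conjI ballI)
  show "\<Union>C \<subseteq> R" "0 \<in> \<Union>C" using assms(1,2) is_ideal_ofD(1,2) by blast+
next
  fix x y assume "x \<in> \<Union>C" "y \<in> \<Union>C"
  then obtain I where "I \<in> C" "x \<in> I" "y \<in> I"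
    using assms(3) unfolding subset_chain_def by blast
  then show "x + y \<in> \<Union>C" using assms(2) is_ideal_ofD(3) by blast
qed (use assms(2) is_ideal_ofD(4) in blast)

lemma exists_maximal_ideal:
  assumes R: "is_subring R" and I: "is_ideal_of R I" and I1: "1 \<notin> I"
  obtains M where "is_maximal_ideal_of R M" "I \<subseteq> M"
proof -
  define \<A> where "\<A> = {J. is_ideal_of R J \<and> I \<subseteq> J \<and> 1 \<notin> J}"
  have "\<exists>M\<in>\<A>. \<forall>J\<in>\<A>. M \<subseteq> J \<longrightarrow> J = M"
  proof (rule subset_Zorn_nonempty)
    fix C assume C: "C \<noteq> {}" "subset.chain \<A> C"
    then have "is_ideal_of R (\<Union>C)"
      by (intro ideal_chain_Union) (auto simp: \<A>_def subset_chain_def)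
    with C show "\<Union>C \<in> \<A>"
      unfolding \<A>_def subset_chain_def by blast
  qed (use I I1 \<A>_def in auto)
  then obtain M where M: "M \<in> \<A>" and Mmax: "\<And>J. J \<in> \<A> \<Longrightarrow> M \<subseteq> J \<Longrightarrow> J = M"
    by blast
  have "is_maximal_ideal_of R M"
    unfolding is_maximal_ideal_of_def
  proof (intro conjI allI impI)
    show "M \<noteq> R" using M is_subringD(2)[OF R] unfolding \<A>_def by blast
    fix J assume "is_ideal_of R J \<and> M \<subseteq> J \<and> J \<noteq> R"
    then show "J = M"
      using M Mmax ideal_eq_if_one_mem[of R J] unfolding \<A>_def by blast
  qed (use M \<A>_def in blast)
  with M that show thesis unfolding \<A>_def by blast
qed

definition is_prime_ideal_of :: "'a::field set \<Rightarrow> 'a set \<Rightarrow> bool" where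
  "is_prime_ideal_of R P \<longleftrightarrow>
     is_ideal_of R P \<and> 1 \<notin> P \<and> (\<forall>a\<in>R. \<forall>b\<in>R. a * b \<in> P \<longrightarrow> a \<in> P \<or> b \<in> P)"

lemma prime_ideal_prod:
  assumes P: "is_prime_ideal_of R P" and R: "is_subring R" and "finite A"
    and "\<And>i. i \<in> A \<Longrightarrow> f i \<in> R" and "prod f A \<in> P"
  shows "\<exists>i\<in>A. f i \<in> P"
  using assms(3-)
proof (induction A rule: finite_induct)
  case empty then show ?case using P by (simp add: is_prime_ideal_of_def)
next
  case (insert i A)
  have "prod f A \<in> R" using insert.prems by (auto intro!: subring_prod[OF R])
  then have "f i \<in> P \<or> prod f A \<in> P"
    using P insert unfolding is_prime_ideal_of_def by simp
  then show ?case using insert by auto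
qed

lemma ideal_prod:
  assumes "is_subring R" "is_ideal_of R I" "finite A" "i \<in> A" "f i \<in> I" "\<And>j. j \<in> A \<Longrightarrow> f j \<in> R"
  shows "prod f A \<in> I"
proof -
  have "prod f A = f i * prod f (A - {i})" using assms(3,4) by (rule prod.remove)
  moreover have "prod f (A - {i}) \<in> R" using assms(6) by (auto intro!: subring_prod[OF assms(1)])
  ultimately show ?thesis using assms(2,5) ideal_mult_right by metis
qed

text \<open>With \<open>a P \<in> I\<close> outside every prime but \<open>P\<close>, the element \<open>a P0 + \<Prod>{a P | P \<noteq> P0}\<close>
  of \<open>I\<close> lies in no prime of \<open>\<P>\<close>.\<close>

lemma prime_avoidance_irredundant:
  assumes R: "is_subring R" and fin: "finite \<P>" and prime: "\<And>P. P \<in> \<P> \<Longrightarrow> is_prime_ideal_of R P"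
    and I: "is_ideal_of R I" and P01: "P0 \<in> \<P>" "P1 \<in> \<P>" "P1 \<noteq> P0"
    and a: "\<And>P. P \<in> \<P> \<Longrightarrow> a P \<in> I \<and> a P \<notin> \<Union>(\<P> - {P})"
  shows "\<not> I \<subseteq> \<Union>\<P>"
proof
  assume cov: "I \<subseteq> \<Union>\<P>"
  have aP: "a P \<in> P" if "P \<in> \<P>" for P using a[OF that] cov by blast
  have aR: "a P \<in> R" if "P \<in> \<P>" for P using a[OF that] is_ideal_ofD(1)[OF I] by blast
  have ideal: "is_ideal_of R P" if "P \<in> \<P>" for P using prime[OF that]
    by (simp add: is_prime_ideal_of_def)
  define b where "b = a P0 + prod a (\<P> - {P0})"
  have "prod a (\<P> - {P0}) \<in> I"
    using P01 a fin by (intro ideal_prod[OF R I, of _ P1] aR) auto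
  then have "b \<in> I" using I a[OF P01(1)] unfolding b_def by (blast intro: is_ideal_ofD(3))
  then obtain P where P: "P \<in> \<P>" "b \<in> P" using cov by blast
  show False
  proof (cases "P = P0")
    case True
    then have "prod a (\<P> - {P0}) \<in> P0"
      using ideal_diff[OF R ideal P(2) aP] P unfolding b_def by simp
    then obtain Q where "Q \<in> \<P> - {P0}" "a Q \<in> P0"
      using prime_ideal_prod[OF prime[OF P01(1)] R] fin aR by blast
    then show False using a[of Q] P01(1) by blast
  next
    case False
    have "prod a (\<P> - {P0}) \<in> P"
      using P False fin aP aR by (intro ideal_prod[OF R ideal[OF P(1)], of _ P]) auto
    then have "a P0 \<in> P"
      using ideal_diff[OF R ideal[OF P(1)] P(2), of "prod a (\<P> - {P0})"] unfolding b_def by simp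
    then show False using a[OF P01(1)] P False by blast
  qed
qed

lemma prime_avoidance:
  assumes R: "is_subring R" and "finite \<P>" and "\<And>P. P \<in> \<P> \<Longrightarrow> is_prime_ideal_of R P"
    and I: "is_ideal_of R I" and "I \<subseteq> \<Union>\<P>"
  shows "\<exists>P\<in>\<P>. I \<subseteq> P"
  using assms(2,3,5)
proof (induction \<P> rule: finite_psubset_induct)
  case (psubset \<P>)
  show ?case
  proof (cases "\<exists>P0\<in>\<P>. I \<subseteq> \<Union>(\<P> - {P0})")
    case True
    then obtain P0 where "P0 \<in> \<P>" "I \<subseteq> \<Union>(\<P> - {P0})" by blast
    with psubset show ?thesis by (metis Diff_iff Diff_subset psubset_eq singletonI)
  next
    case False
    obtain P0 where P0: "P0 \<in> \<P>" using psubset.prems(2) is_ideal_ofD(2)[OF I] by blast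
    show ?thesis
    proof (cases "\<P> = {P0}")
      case True
      then show ?thesis using psubset.prems(2) by auto
    next
      case False
      then obtain P1 where "P1 \<in> \<P>" "P1 \<noteq> P0" using P0 by blast
      moreover have "\<forall>P\<in>\<P>. \<exists>x. x \<in> I \<and> x \<notin> \<Union>(\<P> - {P})"
        using \<open>\<not> (\<exists>P0\<in>\<P>. I \<subseteq> \<Union>(\<P> - {P0}))\<close> by blast
      then obtain a where "\<And>P. P \<in> \<P> \<Longrightarrow> a P \<in> I \<and> a P \<notin> \<Union>(\<P> - {P})"
        by metis
      ultimately show ?thesis
        using prime_avoidance_irredundant[OF R psubset.hyps psubset.prems(1) I P0] psubset.prems(2)
        by blast
    qed
  qed
qed

lemma localization_subring:
  assumes R: "is_subring R" and P: "is_prime_ideal_of R P"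
  shows "is_subring (localization_at R P)"
proof -
  have P0: "0 \<in> P" and P1: "1 \<notin> P" and Pmult: "\<And>s t. s \<in> R \<Longrightarrow> t \<in> R \<Longrightarrow> s \<notin> P \<Longrightarrow> t \<notin> P \<Longrightarrow> s * t \<notin> P"
    using P is_ideal_ofD(2) unfolding is_prime_ideal_of_def by blast+
  have frac: "a / s \<in> localization_at R P" if "a \<in> R" "s \<in> R" "s \<notin> P" for a s
    using that unfolding localization_at_def by blast
  show ?thesis
    unfolding is_subring_def
  proof (intro conjI ballI)
    show "0 \<in> localization_at R P" "1 \<in> localization_at R P"
      using frac[of 0 1] frac[of 1 1] is_subringD(1,2)[OF R] P1 by simp_all
  next
    fix x y assume "x \<in> localization_at R P" "y \<in> localization_at R P"
    then obtain a s b t where x: "x = a / s" "a \<in> R" "s \<in> R" "s \<notin> P"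
      and y: "y = b / t" "b \<in> R" "t \<in> R" "t \<notin> P"
      unfolding localization_at_def by blast
    have "s \<noteq> 0" "t \<noteq> 0" using x y P0 by auto
    then have "x + y = (a * t + b * s) / (s * t)" "x * y = (a * b) / (s * t)"
      using x y by (simp_all add: field_simps)
    then show "x + y \<in> localization_at R P" "x * y \<in> localization_at R P"
      using x y Pmult by (auto intro!: frac is_subringD[OF R])
  next
    fix x assume "x \<in> localization_at R P"
    then obtain a s where "x = a / s" "a \<in> R" "s \<in> R" "s \<notin> P"
      unfolding localization_at_def by blast
    then show "- x \<in> localization_at R P"
      using frac[of "- a" s] is_subringD(5)[OF R] by simp
  qed
qed

lemma subset_localization:
  assumes "is_subring R" "1 \<notin> P"
  shows "R \<subseteq> localization_at R P"
proof
  fix r assume "r \<in> R"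
  then have "r = r / 1 \<and> r \<in> R \<and> 1 \<in> R \<and> 1 \<notin> P" using assms is_subringD(2) by simp
  then show "r \<in> localization_at R P" unfolding localization_at_def by blast
qed

section \<open>Valuation overrings of integrally closed rings\<close>

definition adjoin :: "'a::field set \<Rightarrow> 'a \<Rightarrow> 'a set" where
  "adjoin B y = {poly p y | p. \<forall>i. coeff p i \<in> B}"

lemma subset_adjoin:
  assumes B: "is_subring B"
  shows "B \<subseteq> adjoin B y"
proof
  fix b assume "b \<in> B"
  then have "\<forall>i. coeff [:b:] i \<in> B" using is_subringD(1)[OF B]
    by (simp add: coeff_pCons split: nat.split)
  then show "b \<in> adjoin B y" unfolding adjoin_def by (intro CollectI exI[of _ "[:b:]"]) simp
qed

lemma subring_adjoin:
  assumes B: "is_subring B"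
  shows "is_subring (adjoin B y)"
  unfolding is_subring_def
proof (intro conjI ballI)
  show "0 \<in> adjoin B y" "1 \<in> adjoin B y"
    using subset_adjoin[OF B] is_subringD(1,2)[OF B] by blast+
next
  fix a b assume "a \<in> adjoin B y" "b \<in> adjoin B y"
  then obtain p q where a: "a = poly p y" "\<forall>i. coeff p i \<in> B"
    and b: "b = poly q y" "\<forall>i. coeff q i \<in> B"
    unfolding adjoin_def by blast
  have "\<forall>i. coeff (p + q) i \<in> B" using a b by (simp add: is_subringD(3)[OF B])
  then show "a + b \<in> adjoin B y" unfolding adjoin_def using a b
    by (intro CollectI exI[of _ "p + q"]) simp
  have "\<forall>i. coeff (p * q) i \<in> B"
    using a b by (auto simp: coeff_mult intro!: subring_sum[OF B] is_subringD(4)[OF B])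
  then show "a * b \<in> adjoin B y" unfolding adjoin_def using a b
    by (intro CollectI exI[of _ "p * q"]) simp
next
  fix a assume "a \<in> adjoin B y"
  then obtain p where "a = poly p y" "\<forall>i. coeff p i \<in> B" unfolding adjoin_def by blast
  then have "- a = poly (- p) y \<and> (\<forall>i. coeff (- p) i \<in> B)" using is_subringD(5)[OF B] by simp
  then show "- a \<in> adjoin B y" unfolding adjoin_def by blast
qed

lemma mem_adjoin:
  assumes B: "is_subring B"
  shows "y \<in> adjoin B y"
proof -
  have "\<forall>i. coeff [:0, 1:] i \<in> B" using is_subringD(1,2)[OF B]
    by (simp add: coeff_pCons split: nat.split)
  then show ?thesis unfolding adjoin_def by (intro CollectI exI[of _ "[:0, 1:]"]) simp
qed

text \<open>If \<open>g = p(1/g)\<close> with \<open>deg p = n\<close>, then \<open>g\<close> is a root of the monic polynomial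
  \<open>X^(n+1) - X^n p(1/X)\<close> over \<open>R\<close>.\<close>

lemma integrally_closed_not_in_adjoin_inverse:
  assumes R: "is_subring R" and ic: "is_integrally_closed R" and g: "g \<notin> R"
  shows "g \<notin> adjoin R (inverse g)"
proof
  assume "g \<in> adjoin R (inverse g)"
  then obtain p where p: "g = poly p (inverse g)" "\<forall>i. coeff p i \<in> R"
    unfolding adjoin_def by auto
  have g0: "g \<noteq> 0" using g is_subringD(1)[OF R] by auto
  define n where "n = degree p"
  define q where "q = monom 1 (Suc n) - reflect_poly p"
  have "poly q g = g ^ Suc n - g ^ n * poly p (inverse g)"
    unfolding q_def n_def by (simp add: poly_monom poly_reflect_poly_nz[OF g0])
  then have root: "poly q g = 0" using p(1) by simp
  have dr: "degree (reflect_poly p) \<le> n" unfolding n_def by (rule degree_reflect_poly_le)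
  have cq: "coeff q i = (if i = Suc n then 1 else 0) - coeff (reflect_poly p) i" for i
    unfolding q_def by simp
  have "coeff q (Suc n) = 1" using dr by (simp add: cq coeff_eq_0)
  moreover have "degree q \<le> Suc n"
    unfolding q_def
    by (rule degree_diff_le) (use dr in \<open>auto simp: degree_monom_le intro: le_trans\<close>)
  ultimately have monic: "lead_coeff q = 1" by (metis le_antisym le_degree zero_neq_one)
  have "coeff q i \<in> R" for i
    using p(2) by (auto simp: cq coeff_reflect_poly intro!: subring_diff[OF R] is_subringD[OF R])
  then have "g \<in> R" using ic monic root unfolding is_integrally_closed_def by blast
  with g show False by contradiction
qed

definition ideal_in_jacobson_radical :: "'a::field set \<Rightarrow> 'a set \<Rightarrow> bool" where
  "ideal_in_jacobson_radical V J \<longleftrightarrow> is_ideal_of V J \<and> (\<forall>a\<in>J. 1 - a \<noteq> 0 \<and> inverse (1 - a) \<in> V)"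

lemma jacobson_one_notin: "ideal_in_jacobson_radical V J \<Longrightarrow> 1 \<notin> J"
  unfolding ideal_in_jacobson_radical_def by auto

lemma jacobson_normalize_constant_coeff:
  assumes V: "is_subring V" and J: "ideal_in_jacobson_radical V J"
    and q: "\<forall>i. coeff q i \<in> J" "poly q z = 1"
  obtains q' where "\<forall>i. coeff q' i \<in> J" "poly q' z = 1" "coeff q' 0 = 0" "degree q' \<le> degree q"
proof
  define u where "u = inverse (1 - coeff q 0)"
  have JV: "is_ideal_of V J" and u: "1 - coeff q 0 \<noteq> 0" "u \<in> V"
    using J q(1) unfolding ideal_in_jacobson_radical_def u_def by auto
  define q' where "q' = smult u (q - [:coeff q 0:])"
  show "poly q' z = 1" unfolding q'_def u_def using q(2) u(1) by simp
  show "coeff q' 0 = 0" unfolding q'_def by simp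
  show "degree q' \<le> degree q" unfolding q'_def
    by (rule order.trans[OF degree_smult_le degree_diff_le]) auto
  have "coeff q i - coeff [:coeff q 0:] i \<in> J" for i
    using q(1) is_ideal_ofD(2)[OF JV]
    by (intro ideal_diff[OF V JV]) (auto simp: coeff_pCons split: nat.split)
  then show "\<forall>i. coeff q' i \<in> J" unfolding q'_def using u(2) is_ideal_ofD(4)[OF JV] by simp
qed

text \<open>Writing \<open>1 = q(1/y)\<close> with \<open>q(0) = 0\<close> and multiplying by \<open>y^n\<close> expresses \<open>y^n\<close> by
  lower powers with coefficients in \<open>J\<close>; this eliminates the leading term of \<open>p\<close>.\<close>

lemma jacobson_degree_reduce:
  assumes V: "is_subring V" and J: "ideal_in_jacobson_radical V J" and y0: "y \<noteq> 0"
    and p: "\<forall>i. coeff p i \<in> J" "poly p y = 1"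
    and q: "\<forall>i. coeff q i \<in> J" "poly q (inverse y) = 1"
    and deg: "degree q \<le> degree p"
  obtains p' where "\<forall>i. coeff p' i \<in> J" "poly p' y = 1" "degree p' < degree p"
proof -
  have JV: "is_ideal_of V J" using J unfolding ideal_in_jacobson_radical_def by blast
  obtain q' where q': "\<forall>i. coeff q' i \<in> J" "poly q' (inverse y) = 1" "coeff q' 0 = 0"
    "degree q' \<le> degree q"
    using jacobson_normalize_constant_coeff[OF V J q] .
  define n where "n = degree p"
  define k where "k = degree q'"
  have kn: "k \<le> n" using q'(4) deg unfolding k_def n_def by simp
  have n0: "n \<noteq> 0"
  proof
    assume "n = 0"
    then have "poly p y = coeff p 0" unfolding n_def by (simp add: poly_altdef)
    then show False using p jacobson_one_notin[OF J] by metis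
  qed
  define r where "r = monom 1 (n - k) * reflect_poly q'"
  have "poly r y = y ^ (n - k) * y ^ k"
    unfolding r_def k_def using y0 q'(2) by (simp add: poly_monom poly_reflect_poly_nz)
  then have ry: "poly r y = y ^ n" using kn by (simp add: power_add[symmetric])
  have cr: "coeff r i = (if i < n - k then 0 else coeff (reflect_poly q') (i - (n - k)))" for i
    unfolding r_def by (simp add: coeff_monom_mult)
  have rJ: "coeff r i \<in> J" for i
    using q'(1) is_ideal_ofD(2)[OF JV] by (simp add: cr coeff_reflect_poly)
  have dr: "degree r \<le> n - 1"
  proof (rule degree_le, intro allI impI)
    fix i assume "n - 1 < i"
    then have "i - (n - k) > k \<or> i - (n - k) = k" using kn n0 by linarith
    then show "coeff r i = 0" using kn q'(3) by (auto simp: cr coeff_reflect_poly k_def)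
  qed
  define c where "c = coeff p n"
  define p' where "p' = p - monom c n + smult c r"
  have "poly p' y = 1" unfolding p'_def using ry p(2) by (simp add: poly_monom)
  moreover have "coeff p' i \<in> J" for i
  proof -
    have "c \<in> J" "c \<in> V" using p(1) is_ideal_ofD(1)[OF JV] unfolding c_def by auto
    then have "coeff p i - coeff (monom c n) i \<in> J" "c * coeff r i \<in> J"
      using p(1) rJ is_ideal_ofD(2,4)[OF JV] by (auto intro: ideal_diff[OF V JV])
    then show ?thesis unfolding p'_def using is_ideal_ofD(3)[OF JV] by simp
  qed
  moreover have "degree p' \<le> n - 1"
  proof (rule degree_le, intro allI impI)
    fix i assume "n - 1 < i"
    then have "coeff r i = 0" "i \<noteq> n \<Longrightarrow> coeff p i = 0"
      using dr n0 by (simp_all add: coeff_eq_0 n_def)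
    then show "coeff p' i = 0" unfolding p'_def c_def by auto
  qed
  ultimately show thesis using n0 that unfolding n_def by fastforce
qed

lemma jacobson_one_notin_adjoin_or_inverse:
  assumes V: "is_subring V" and J: "ideal_in_jacobson_radical V J" and y0: "y \<noteq> 0"
  shows "1 \<notin> adjoin J y \<or> 1 \<notin> adjoin J (inverse y)"
proof (rule ccontr)
  define P where "P x p \<longleftrightarrow> (\<forall>i. coeff p i \<in> J) \<and> poly p x = 1" for x p
  define Q where "Q pq \<longleftrightarrow> P y (fst pq) \<and> P (inverse y) (snd pq)" for pq
  assume "\<not> ?thesis"
  then have "1 \<in> adjoin J y" "1 \<in> adjoin J (inverse y)" by blast+
  then obtain p0 q0 where "1 = poly p0 y" "\<forall>i. coeff p0 i \<in> J"
    "1 = poly q0 (inverse y)" "\<forall>i. coeff q0 i \<in> J"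
    unfolding adjoin_def by blast
  then have "Q (p0, q0)" unfolding Q_def P_def by simp
  then obtain pq where "Q pq"
    and min: "\<And>pq'. Q pq' \<Longrightarrow> degree (fst pq) + degree (snd pq) \<le> degree (fst pq') + degree (snd pq')"
    using ex_has_least_nat[of Q _ "\<lambda>pq. degree (fst pq) + degree (snd pq)"] by blast
  obtain p q where pq_def: "pq = (p, q)" by (cases pq)
  have p: "\<forall>i. coeff p i \<in> J" "poly p y = 1" and q: "\<forall>i. coeff q i \<in> J" "poly q (inverse y) = 1"
    using \<open>Q pq\<close> unfolding Q_def P_def pq_def by simp_all
  show False
  proof (cases "degree q \<le> degree p")
    case True
    obtain p' where "\<forall>i. coeff p' i \<in> J" "poly p' y = 1" "degree p' < degree p"
      by (rule jacobson_degree_reduce[OF V J y0 p q True])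
    then show False using min[of "(p', q)"] q unfolding Q_def P_def pq_def by simp
  next
    case False
    have inv: "inverse y \<noteq> 0" "poly p (inverse (inverse y)) = 1" "degree p \<le> degree q"
      using y0 p(2) False by simp_all
    obtain q' where "\<forall>i. coeff q' i \<in> J" "poly q' (inverse y) = 1" "degree q' < degree q"
      by (rule jacobson_degree_reduce[OF V J inv(1) q p(1) inv(2,3)])
    then show False using min[of "(p, q')"] p unfolding Q_def P_def pq_def by simp
  qed
qed

lemma exists_maximal_subring_avoiding:
  assumes A: "is_subring A" and g: "g \<notin> A"
  obtains V where "is_subring V" "A \<subseteq> V" "g \<notin> V" "\<And>y. y \<notin> V \<Longrightarrow> g \<in> adjoin V y"
proof -
  define \<Sigma> where "\<Sigma> = {B. is_subring B \<and> A \<subseteq> B \<and> g \<notin> B}"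
  have "\<exists>V\<in>\<Sigma>. \<forall>B\<in>\<Sigma>. V \<subseteq> B \<longrightarrow> B = V"
  proof (rule subset_Zorn_nonempty)
    fix C assume C: "C \<noteq> {}" "subset.chain \<Sigma> C"
    then have "is_subring (\<Union>C)"
      by (intro subring_chain_Union) (auto simp: \<Sigma>_def subset_chain_def)
    with C show "\<Union>C \<in> \<Sigma>" unfolding \<Sigma>_def subset_chain_def by blast
  qed (use A g \<Sigma>_def in auto)
  then obtain V where V: "V \<in> \<Sigma>" and max: "\<And>B. B \<in> \<Sigma> \<Longrightarrow> V \<subseteq> B \<Longrightarrow> B = V" by blast
  have "g \<in> adjoin V y" if "y \<notin> V" for y
  proof (rule ccontr)
    assume "g \<notin> adjoin V y"
    then have "adjoin V y \<in> \<Sigma>"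
      using V subring_adjoin subset_adjoin unfolding \<Sigma>_def by blast
    then show False
      using max V that subset_adjoin mem_adjoin unfolding \<Sigma>_def by blast
  qed
  with V that show thesis unfolding \<Sigma>_def by blast
qed

lemma maximal_subring_avoiding_jacobson:
  assumes V: "is_subring V" and t: "inverse g \<in> V" and g: "g \<notin> V"
    and max: "\<And>y. y \<notin> V \<Longrightarrow> g \<in> adjoin V y"
  shows "ideal_in_jacobson_radical V {inverse g * v | v. v \<in> V}"
proof -
  define t where "t = inverse g"
  have g0: "g \<noteq> 0" using g is_subringD(1)[OF V] by auto
  then have tg: "t * g = 1" unfolding t_def by simp
  have ideal: "is_ideal_of V {t * v | v. v \<in> V}"
    unfolding is_ideal_of_def
    using t is_subringD[OF V] by (auto simp: t_def distrib_left[symmetric] mult.left_commute)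
  have unit: "1 + t * u \<noteq> 0 \<and> inverse (1 + t * u) \<in> V" if u: "u \<in> V" for u
  proof
    define e where "e = 1 + t * u"
    have "g * e = g + u" unfolding e_def using tg by (simp add: algebra_simps)
    then show e0: "e \<noteq> 0" using g u is_subringD(5)[OF V] by (metis add_eq_0_iff2 mult_zero_right)
    have eV: "e \<in> V" unfolding e_def using V t u by (auto simp: t_def intro: is_subringD)
    have "\<exists>w\<in>V. e ^ n = 1 + t * w" for n
    proof (induction n)
      case 0 then show ?case using is_subringD(1)[OF V] by force
    next
      case (Suc n)
      then obtain w where "w \<in> V" "e ^ n = 1 + t * w" by blast
      then have "e ^ Suc n = 1 + t * (u + w + t * u * w)" "u + w + t * u * w \<in> V"
        using u t V by (auto simp: e_def t_def algebra_simps intro!: is_subringD)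
      then show ?case by blast
    qed
    (* Otherwise g = p(1/e) with p over V, so e^d g \<in> V for d = deg p; as e^d \<in> 1 + tV,
       also e^d g \<in> g + V, forcing g \<in> V. *)
    show "inverse e \<in> V"
    proof (rule ccontr)
      assume "inverse e \<notin> V"
      then obtain p where p: "g = poly p (inverse e)" "\<forall>i. coeff p i \<in> V"
        using max unfolding adjoin_def by blast
      obtain w where w: "w \<in> V" "e ^ degree p = 1 + t * w"
        using \<open>\<And>n. \<exists>w\<in>V. e ^ n = 1 + t * w\<close> by blast
      have "g + w = e ^ degree p * g" using w(2) tg by (simp add: algebra_simps)
      also have "\<dots> = poly (reflect_poly p) e" using p(1) by (simp add: poly_reflect_poly_nz[OF e0])
      also have "\<dots> \<in> V"
        using p(2) eV is_subringD(1)[OF V]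
        by (intro poly_in_subring[OF V]) (auto simp: coeff_reflect_poly)
      finally have "g + w \<in> V" .
      then have "g \<in> V" using subring_diff[OF V _ w(1)] by fastforce
      with g show False by contradiction
    qed
  qed
  have "1 - a \<noteq> 0 \<and> inverse (1 - a) \<in> V" if "a \<in> {t * v | v. v \<in> V}" for a
    using that unit is_subringD(5)[OF V] by force
  with ideal show ?thesis unfolding ideal_in_jacobson_radical_def t_def by blast
qed

lemma is_valuation_ringD: "is_valuation_ring V \<Longrightarrow> is_subring V"
  unfolding is_valuation_ring_def by blast

lemma valuation_ring_mem_or_inverse: "is_valuation_ring V \<Longrightarrow> x \<noteq> 0 \<Longrightarrow> x \<in> V \<or> inverse x \<in> V"
  unfolding is_valuation_ring_def by blast

lemma is_valuation_ring_UNIV: "is_valuation_ring UNIV"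
  unfolding is_valuation_ring_def by (simp add: is_subring_UNIV)

text \<open>Atiyah-Macdonald 5.21: for \<open>y \<notin> V\<close> maximality gives \<open>g \<in> V[y]\<close>, i.e. \<open>1 \<in> J[y]\<close> for
  the ideal \<open>J = V/g\<close>; this cannot happen for both \<open>y\<close> and \<open>1/y\<close>.\<close>

lemma maximal_subring_avoiding_valuation:
  assumes V: "is_subring V" and t: "inverse g \<in> V" and g: "g \<notin> V"
    and max: "\<And>y. y \<notin> V \<Longrightarrow> g \<in> adjoin V y"
  shows "is_valuation_ring V"
  unfolding is_valuation_ring_def
proof (intro conjI allI impI V)
  fix y :: 'a assume y0: "y \<noteq> 0"
  define J where "J = {inverse g * v | v. v \<in> V}"
  have one: "1 \<in> adjoin J x" if x: "x \<notin> V" for x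
  proof -
    obtain p where p: "g = poly p x" "\<forall>i. coeff p i \<in> V" using max[OF x] unfolding adjoin_def
      by blast
    have "g \<noteq> 0" using g is_subringD(1)[OF V] by auto
    then have "1 = poly (smult (inverse g) p) x \<and> (\<forall>i. coeff (smult (inverse g) p) i \<in> J)"
      using p unfolding J_def by auto
    then show ?thesis unfolding adjoin_def by blast
  qed
  show "y \<in> V \<or> inverse y \<in> V"
    using jacobson_one_notin_adjoin_or_inverse[OF V maximal_subring_avoiding_jacobson[OF assms] y0]
      one unfolding J_def by blast
qed

theorem valuation_ring_exists:
  assumes R: "is_subring R" and ic: "is_integrally_closed R" and g: "g \<notin> R"
  obtains V where "is_valuation_ring V" "R \<subseteq> V" "g \<notin> V"
proof -
  obtain V where V: "is_subring V" "adjoin R (inverse g) \<subseteq> V" "g \<notin> V"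
    and max: "\<And>y. y \<notin> V \<Longrightarrow> g \<in> adjoin V y"
    by (rule exists_maximal_subring_avoiding[OF subring_adjoin[OF R]
        integrally_closed_not_in_adjoin_inverse[OF R ic g]]) blast
  have "inverse g \<in> V" "R \<subseteq> V" using V(2) mem_adjoin[OF R] subset_adjoin[OF R] by blast+
  with V max show thesis using maximal_subring_avoiding_valuation that by blast
qed

section \<open>Finite intersections of valuation rings\<close>

definition nonunits :: "'a::field set \<Rightarrow> 'a set" where
  "nonunits V = {x \<in> V. x = 0 \<or> inverse x \<notin> V}"

lemma nonunits_subset: "nonunits V \<subseteq> V"
  unfolding nonunits_def by blast

lemma one_notin_nonunits [simp]: "1 \<notin> nonunits V"
  unfolding nonunits_def by simp

lemma unit_if_notin_nonunits: "x \<in> V \<Longrightarrow> x \<notin> nonunits V \<Longrightarrow> x \<noteq> 0 \<and> inverse x \<in> V"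
  unfolding nonunits_def by blast

lemma units_mult:
  "is_subring V \<Longrightarrow> x \<in> V - nonunits V \<Longrightarrow> y \<in> V - nonunits V \<Longrightarrow> x * y \<in> V - nonunits V"
  unfolding nonunits_def by (auto simp: is_subringD(4))

lemma nonunits_mult:
  assumes V: "is_subring V" and x: "x \<in> nonunits V" and r: "r \<in> V"
  shows "r * x \<in> nonunits V"
proof -
  have "inverse x \<in> V" if "r * x \<noteq> 0" "inverse (r * x) \<in> V"
    using is_subringD(4)[OF V r that(2)] that(1) by (simp add: field_simps)
  then show ?thesis using x r V unfolding nonunits_def by (auto simp: is_subringD(4))
qed

lemma nonunits_add:
  assumes V: "is_valuation_ring V" and x: "x \<in> nonunits V" and y: "y \<in> nonunits V"
  shows "x + y \<in> nonunits V"
proof -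
  have S: "is_subring V" using V by (rule is_valuation_ringD)
  have wlog: "a + b \<in> nonunits V"
    if a: "a \<in> nonunits V" "a \<noteq> 0" and b: "b \<in> nonunits V" and ba: "b / a \<in> V" for a b
  proof -
    have "inverse a \<in> V" if "a + b \<noteq> 0" "inverse (a + b) \<in> V"
    proof -
      have "inverse a = (1 + b / a) * inverse (a + b)" using a(2) that(1) by (simp add: field_simps)
      then show ?thesis using is_subringD[OF S] ba that(2) by metis
    qed
    then show ?thesis using a b nonunits_subset unfolding nonunits_def
      by (auto simp: is_subringD(3)[OF S])
  qed
  show ?thesis
  proof (cases "x = 0 \<or> y = 0")
    case True then show ?thesis using x y by auto
  next
    case False
    then have "y / x \<in> V \<or> x / y \<in> V"
      using valuation_ring_mem_or_inverse[OF V, of "y / x"] by auto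
    then show ?thesis using wlog x y False by (metis add.commute)
  qed
qed

lemma ideal_nonunits: "is_valuation_ring V \<Longrightarrow> is_ideal_of V (nonunits V)"
  unfolding is_ideal_of_def
  using nonunits_subset nonunits_add nonunits_mult is_valuation_ringD is_subringD(1)
  by (metis (mono_tags, lifting) CollectI nonunits_def)

lemma unit_add_nonunit:
  assumes V: "is_valuation_ring V" and u: "u \<in> V - nonunits V" and m: "m \<in> nonunits V"
  shows "u + m \<in> V - nonunits V"
proof -
  have S: "is_subring V" using V by (rule is_valuation_ringD)
  have "u + m \<in> V" using u m nonunits_subset is_subringD(3)[OF S] by blast
  moreover have "u + m \<notin> nonunits V"
  proof
    assume "u + m \<in> nonunits V"
    then have "(u + m) - m \<in> nonunits V" using ideal_diff[OF S ideal_nonunits[OF V] _ m] by blast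
    with u show False by simp
  qed
  ultimately show ?thesis by blast
qed

definition geom_sum :: "nat \<Rightarrow> 'a::field \<Rightarrow> 'a" where
  "geom_sum s y = (\<Sum>j<s. y ^ j)"

lemma geom_sum_add: "geom_sum (a + b) y = geom_sum a y + y ^ a * geom_sum b y"
  unfolding geom_sum_def by (induction b) (auto simp: algebra_simps power_add)

lemma geom_sum_Suc: "geom_sum (Suc s) y = 1 + y * geom_sum s y"
  using geom_sum_add[of 1 s y] by (simp add: geom_sum_def)

lemma geom_sum_in_subring: "is_subring V \<Longrightarrow> y \<in> V \<Longrightarrow> geom_sum s y \<in> V"
  unfolding geom_sum_def by (auto intro!: subring_sum subring_power)

lemma geom_sum_inverse:
  fixes y :: "'a::field"
  assumes y0: "y \<noteq> 0"
  shows "geom_sum s y = y ^ (s - 1) * geom_sum s (inverse y)"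
proof -
  have "geom_sum s y = (\<Sum>j<s. y ^ (s - Suc j))"
    unfolding geom_sum_def by (rule sum.nat_diff_reindex[symmetric])
  also have "\<dots> = (\<Sum>j<s. y ^ (s - 1) * inverse y ^ j)"
  proof (rule sum.cong[OF refl])
    fix j assume "j \<in> {..<s}"
    then have "y ^ (s - 1) = y ^ (s - Suc j) * y ^ j" by (simp flip: power_add)
    then show "y ^ (s - Suc j) = y ^ (s - 1) * inverse y ^ j"
      using y0 by (simp add: power_inverse field_simps)
  qed
  also have "\<dots> = y ^ (s - 1) * geom_sum s (inverse y)"
    unfolding geom_sum_def by (simp add: sum_distrib_left)
  finally show ?thesis .
qed

text \<open>Since \<open>geom_sum (a + b) y = geom_sum a y + y^a geom_sum b y\<close> with \<open>y^a\<close> a unit, the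
  \<open>s\<close> with \<open>geom_sum s y \<in> nonunits V\<close> are the multiples of the least positive one.\<close>

lemma geom_sum_nonunits_dvd:
  assumes V: "is_valuation_ring V" and y: "y \<in> V - nonunits V"
  obtains m where "m \<ge> 2" "\<And>s. geom_sum s y \<in> nonunits V \<Longrightarrow> m dvd s"
proof (cases "\<exists>s\<ge>1. geom_sum s y \<in> nonunits V")
  case False
  show thesis
  proof (rule that[of 2])
    fix s assume "geom_sum s y \<in> nonunits V"
    with False have "s = 0" by (cases s) auto
    then show "2 dvd s" by simp
  qed simp
next
  case True
  have S: "is_subring V" using V by (rule is_valuation_ringD)
  define m where "m = (LEAST s. s \<ge> 1 \<and> geom_sum s y \<in> nonunits V)"
  have m: "m \<ge> 1" "geom_sum m y \<in> nonunits V"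
    unfolding m_def using LeastI_ex[OF True] by auto
  have less_m: "geom_sum r y \<notin> nonunits V" if r: "r \<ge> 1" "r < m" for r
    using not_less_Least[OF r(2)[unfolded m_def]] r(1) by blast
  have "geom_sum 1 y = 1" by (simp add: geom_sum_def)
  then have "m \<noteq> 1" using m(2) by auto
  then have m2: "m \<ge> 2" using m(1) by linarith
  have pow: "y ^ n \<in> V - nonunits V" for n
    by (induction n) (use S y units_mult in \<open>auto simp: is_subringD(2)\<close>)
  have mult_m: "geom_sum (q * m) y \<in> nonunits V" for q
  proof (induction q)
    case 0 then show ?case using ideal_nonunits[OF V] is_ideal_ofD(2) by (simp add: geom_sum_def)
  next
    case (Suc q)
    have "geom_sum (Suc q * m) y = geom_sum (q * m) y + y ^ (q * m) * geom_sum m y"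
      using geom_sum_add[of "q * m" m y] by (simp add: add.commute)
    then show ?case using Suc nonunits_add[OF V] nonunits_mult[OF S m(2)] pow by auto
  qed
  have "m dvd s" if s: "geom_sum s y \<in> nonunits V" for s
  proof (rule ccontr)
    assume "\<not> m dvd s"
    then have r: "s mod m \<ge> 1" "s mod m < m" using m(1) by (auto simp: dvd_eq_mod_eq_0)
    have "y ^ (s div m * m) * geom_sum (s mod m) y \<in> V - nonunits V"
      using units_mult[OF S pow] less_m[OF r] geom_sum_in_subring[OF S] y by blast
    then have "geom_sum (s div m * m) y + y ^ (s div m * m) * geom_sum (s mod m) y \<in> V - nonunits V"
      using unit_add_nonunit[OF V _ mult_m] by (metis add.commute)
    then show False using s by (simp flip: geom_sum_add)
  qed
  with m2 that show thesis by blast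
qed

lemma exists_geom_sum_units:
  assumes fin: "finite \<V>" and val: "\<And>V. V \<in> \<V> \<Longrightarrow> is_valuation_ring V"
  obtains s where "s \<ge> 2" "\<And>V. V \<in> \<V> \<Longrightarrow> y \<in> V - nonunits V \<Longrightarrow> geom_sum s y \<notin> nonunits V"
proof -
  define \<W> where "\<W> = {V \<in> \<V>. y \<in> V - nonunits V}"
  have "\<forall>V\<in>\<W>. \<exists>m. m \<ge> 2 \<and> (\<forall>s. geom_sum s y \<in> nonunits V \<longrightarrow> m dvd s)"
  proof
    fix V assume "V \<in> \<W>"
    then obtain m where "m \<ge> 2" "\<And>s. geom_sum s y \<in> nonunits V \<Longrightarrow> m dvd s"
      using geom_sum_nonunits_dvd[OF val] unfolding \<W>_def by blast
    then show "\<exists>m. m \<ge> 2 \<and> (\<forall>s. geom_sum s y \<in> nonunits V \<longrightarrow> m dvd s)" by blast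
  qed
  then obtain m where m: "\<forall>V\<in>\<W>. m V \<ge> 2 \<and> (\<forall>s. geom_sum s y \<in> nonunits V \<longrightarrow> m V dvd s)"
    by (rule bchoice[THEN exE])
  define s where "s = Suc (\<Prod>V\<in>\<W>. m V)"
  have "(\<Prod>V\<in>\<W>. m V) > 0" by (rule prod_pos) (use m in fastforce)
  then have "s \<ge> 2" unfolding s_def by simp
  moreover have "geom_sum s y \<notin> nonunits V" if V: "V \<in> \<W>" for V
  proof
    assume "geom_sum s y \<in> nonunits V"
    then have "m V dvd s" using m V by blast
    moreover have "m V dvd (\<Prod>V\<in>\<W>. m V)" using fin V unfolding \<W>_def by (intro dvd_prodI) auto
    ultimately have "m V dvd s - (\<Prod>V\<in>\<W>. m V)" by (rule dvd_diff_nat)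
    then have "m V dvd 1" by (simp add: s_def)
    then show False using m V by fastforce
  qed
  ultimately show thesis by (rule that) (auto simp: \<W>_def)
qed

lemma geom_sum_unit_if_nonunit:
  assumes V: "is_valuation_ring V" and x: "x \<in> nonunits V" and s: "s \<ge> 1"
  shows "geom_sum s x \<in> V - nonunits V"
proof -
  have S: "is_subring V" using V by (rule is_valuation_ringD)
  obtain s' where s': "s = Suc s'" using s by (cases s) auto
  have "x * geom_sum s' x \<in> nonunits V"
    using nonunits_mult[OF S x geom_sum_in_subring[OF S]] x nonunits_subset
    by (auto simp: mult.commute)
  then show ?thesis using unit_add_nonunit[OF V _ ] is_subringD(2)[OF S]
    by (simp add: s' geom_sum_Suc)
qed

lemma geom_sum_divides_powers:
  assumes V: "is_valuation_ring V" and s: "s \<ge> 2"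
    and unit: "y \<in> V - nonunits V \<Longrightarrow> geom_sum s y \<notin> nonunits V"
  shows "geom_sum s y \<noteq> 0" "j < s \<Longrightarrow> y ^ j / geom_sum s y \<in> V"
proof -
  have S: "is_subring V" using V by (rule is_valuation_ringD)
  have "geom_sum s y \<noteq> 0 \<and> (\<forall>j<s. y ^ j / geom_sum s y \<in> V)"
  proof (cases "y \<in> V")
    case True
    have "geom_sum s y \<in> V - nonunits V"
    proof (cases "y \<in> nonunits V")
      case True
      then show ?thesis using geom_sum_unit_if_nonunit[OF V True] s by simp
    next
      case False
      then show ?thesis using unit \<open>y \<in> V\<close> geom_sum_in_subring[OF S] by blast
    qed
    then have "geom_sum s y \<noteq> 0" "inverse (geom_sum s y) \<in> V"
      using unit_if_notin_nonunits by blast+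
    then show ?thesis
      using True by (simp add: divide_inverse is_subringD(4)[OF S] subring_power[OF S])
  next
    case False
    then have y0: "y \<noteq> 0" using is_subringD(1)[OF S] by auto
    define z where "z = inverse y"
    have "z \<in> V" using valuation_ring_mem_or_inverse[OF V y0] False z_def by auto
    then have "z \<in> nonunits V" using False unfolding z_def nonunits_def by auto
    then have "geom_sum s z \<in> V - nonunits V" using geom_sum_unit_if_nonunit[OF V] s by simp
    then have gz: "geom_sum s z \<noteq> 0" "inverse (geom_sum s z) \<in> V"
      using unit_if_notin_nonunits by blast+
    have eq: "geom_sum s y = y ^ (s - 1) * geom_sum s z"
      using geom_sum_inverse[OF y0] z_def by simp
    then have "geom_sum s y \<noteq> 0" using y0 gz(1) by simp
    moreover have "y ^ j / geom_sum s y \<in> V" if j: "j < s" for j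
    proof -
      have "y ^ (s - 1) = y ^ (s - 1 - j) * y ^ j" using j by (simp flip: power_add)
      then have "y ^ j / geom_sum s y = inverse (y ^ (s - 1 - j)) * inverse (geom_sum s z)"
        using y0 by (simp add: eq divide_inverse inverse_mult_distrib)
      also have "\<dots> = z ^ (s - 1 - j) * inverse (geom_sum s z)"
        by (simp add: z_def power_inverse)
      finally show ?thesis
        using is_subringD(4)[OF S subring_power[OF S \<open>z \<in> V\<close>] gz(2)] by simp
    qed
    ultimately show ?thesis by blast
  qed
  then show "geom_sum s y \<noteq> 0" "j < s \<Longrightarrow> y ^ j / geom_sum s y \<in> V" by auto
qed

lemma prime_ideal_nonunits_Int:
  assumes V: "is_valuation_ring V" and S: "is_subring S" and SV: "S \<subseteq> V"
  shows "is_prime_ideal_of S (nonunits V \<inter> S)"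
  unfolding is_prime_ideal_of_def
proof (intro conjI ballI impI)
  have "is_ideal_of V (nonunits V)" using V by (rule ideal_nonunits)
  then show "is_ideal_of S (nonunits V \<inter> S)"
    using S SV unfolding is_ideal_of_def by (auto intro: is_subringD)
  show "1 \<notin> nonunits V \<inter> S" by simp
  fix a b assume "a \<in> S" "b \<in> S" "a * b \<in> nonunits V \<inter> S"
  then show "a \<in> nonunits V \<inter> S \<or> b \<in> nonunits V \<inter> S"
    using units_mult[OF is_valuation_ringD[OF V], of a b] SV by blast
qed

lemma maximal_ideal_Inter_valuation_rings:
  assumes fin: "finite \<V>" and ne: "\<V> \<noteq> {}" and val: "\<And>V. V \<in> \<V> \<Longrightarrow> is_valuation_ring V"
    and M: "is_maximal_ideal_of (\<Inter>\<V>) M"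
  shows "\<exists>V\<in>\<V>. M = nonunits V \<inter> \<Inter>\<V>"
proof -
  define S where "S = \<Inter>\<V>"
  have S: "is_subring S" unfolding S_def
    by (rule subring_Inter[OF ne]) (use val is_valuation_ringD in blast)
  have prime: "is_prime_ideal_of S (nonunits V \<inter> S)" if "V \<in> \<V>" for V
    using prime_ideal_nonunits_Int[OF val[OF that] S] that unfolding S_def by blast
  have MI: "is_ideal_of S M" using M unfolding is_maximal_ideal_of_def S_def by blast
  have M1: "1 \<notin> M" using maximal_ideal_one_notin[OF M] .
  have "M \<subseteq> \<Union>((\<lambda>V. nonunits V \<inter> S) ` \<V>)"
  proof
    fix x assume x: "x \<in> M"
    then have "x \<in> S" using is_ideal_ofD(1)[OF MI] by blast
    show "x \<in> \<Union>((\<lambda>V. nonunits V \<inter> S) ` \<V>)"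
    proof (rule ccontr)
      assume "\<not> ?thesis"
      then have "x \<noteq> 0 \<and> inverse x \<in> V" if "V \<in> \<V>" for V
        using unit_if_notin_nonunits \<open>x \<in> S\<close> that unfolding S_def by blast
      then have "x \<noteq> 0" "inverse x \<in> S" using ne unfolding S_def by blast+
      then have "1 \<in> M" using is_ideal_ofD(4)[OF MI _ x] by (metis left_inverse)
      with M1 show False by contradiction
    qed
  qed
  then obtain V where V: "V \<in> \<V>" "M \<subseteq> nonunits V \<inter> S"
    using prime_avoidance[OF S _ _ MI, of "(\<lambda>V. nonunits V \<inter> S) ` \<V>"] fin prime by blast
  have "nonunits V \<inter> S \<noteq> S" using is_subringD(2)[OF S] one_notin_nonunits by blast
  then have "nonunits V \<inter> S = M"
    using M V(2) prime[OF V(1)] unfolding is_maximal_ideal_of_def is_prime_ideal_of_def S_def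
    by blast
  with V(1) show ?thesis unfolding S_def by blast
qed

lemma semilocal_Inter_valuation_rings:
  assumes "finite \<V>" "\<V> \<noteq> {}" "\<And>V. V \<in> \<V> \<Longrightarrow> is_valuation_ring V"
  shows "is_semilocal (\<Inter>\<V>)"
proof -
  have "{M. is_maximal_ideal_of (\<Inter>\<V>) M} \<subseteq> (\<lambda>V. nonunits V \<inter> \<Inter>\<V>) ` \<V>"
    using maximal_ideal_Inter_valuation_rings[OF assms] by blast
  then show ?thesis unfolding is_semilocal_def by (rule finite_surj[OF assms(1)])
qed

text \<open>For a suitable \<open>s\<close>, the elements \<open>\<beta> j = y^j / (1 + y + ... + y^(s-1))\<close>, \<open>j < s\<close>, lie in
  every \<open>V \<in> \<V>\<close> and sum to 1, so some \<open>\<beta> j\<close> avoids \<open>M\<close>; then \<open>y = \<beta> (j+1) / \<beta> j\<close> or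
  \<open>1/y = \<beta> (j-1) / \<beta> j\<close> lies in the localization.\<close>

lemma valuation_ring_localization_Inter:
  assumes fin: "finite \<V>" and val: "\<And>V. V \<in> \<V> \<Longrightarrow> is_valuation_ring V" and V0: "V0 \<in> \<V>"
  shows "is_valuation_ring (localization_at (\<Inter>\<V>) (nonunits V0 \<inter> \<Inter>\<V>))"
proof -
  define S where "S = \<Inter>\<V>"
  define M where "M = nonunits V0 \<inter> S"
  have S: "is_subring S" unfolding S_def
    by (rule subring_Inter) (use V0 val is_valuation_ringD in blast)+
  have prime: "is_prime_ideal_of S M"
    unfolding M_def using prime_ideal_nonunits_Int[OF val[OF V0] S] V0 S_def by blast
  then have MI: "is_ideal_of S M" and M1: "1 \<notin> M" unfolding is_prime_ideal_of_def by blast+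
  have "y \<in> localization_at S M \<or> inverse y \<in> localization_at S M" if y0: "y \<noteq> 0" for y
  proof -
    obtain s where s: "s \<ge> 2" "\<And>V. V \<in> \<V> \<Longrightarrow> y \<in> V - nonunits V \<Longrightarrow> geom_sum s y \<notin> nonunits V"
      by (rule exists_geom_sum_units[OF fin val]) auto
    define \<beta> where "\<beta> j = y ^ j / geom_sum s y" for j
    have w0: "geom_sum s y \<noteq> 0" using geom_sum_divides_powers(1)[OF val[OF V0] s(1) s(2)[OF V0]] .
    have \<beta>S: "\<beta> j \<in> S" if "j < s" for j
      unfolding S_def \<beta>_def using geom_sum_divides_powers(2)[OF val s(1) s(2) that] by blast
    have "(\<Sum>j<s. \<beta> j) = 1"
      using w0 unfolding \<beta>_def geom_sum_def by (simp flip: sum_divide_distrib)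
    then have "\<not> (\<forall>j<s. \<beta> j \<in> M)" using ideal_sum[OF MI, of "{..<s}" \<beta>] M1 by auto
    then obtain j where j: "j < s" "\<beta> j \<notin> M" by blast
    have frac: "\<beta> i / \<beta> j \<in> localization_at S M" if "i < s" for i
      unfolding localization_at_def using \<beta>S[OF that] \<beta>S[OF j(1)] j(2) by blast
    have "\<beta> j \<noteq> 0" using j(2) is_ideal_ofD(2)[OF MI] by auto
    then have \<beta>_Suc: "\<beta> (Suc i) / \<beta> i = y" if "i \<le> j" for i
      using that y0 unfolding \<beta>_def by (auto simp: field_simps)
    show ?thesis
    proof (cases "Suc j < s")
      case True
      then show ?thesis using frac \<beta>_Suc[of j] by auto
    next
      case False
      then obtain i where i: "j = Suc i" using j(1) s(1) by (cases j) auto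
      have "\<beta> i / \<beta> j = inverse (\<beta> j / \<beta> i)" by simp
      also have "\<dots> = inverse y" using \<beta>_Suc[of i] i by simp
      finally have "\<beta> i / \<beta> j = inverse y" .
      then show ?thesis using frac[of i] i j(1) by auto
    qed
  qed
  then show ?thesis
    unfolding is_valuation_ring_def S_def M_def using localization_subring[OF S prime] S_def M_def
    by blast
qed

theorem pruefer_semilocal_Inter_valuation_rings:
  assumes "finite \<V>" "\<V> \<noteq> {}" "\<And>V. V \<in> \<V> \<Longrightarrow> is_valuation_ring V"
  shows "is_pruefer (\<Inter>\<V>)" "is_semilocal (\<Inter>\<V>)"
proof -
  have "is_subring (\<Inter>\<V>)" by (rule subring_Inter) (use assms is_valuation_ringD in blast)+
  moreover have "is_valuation_ring (localization_at (\<Inter>\<V>) M)"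
    if M: "is_maximal_ideal_of (\<Inter>\<V>) M" for M
  proof -
    obtain V where "V \<in> \<V>" "M = nonunits V \<inter> \<Inter>\<V>"
      using maximal_ideal_Inter_valuation_rings[OF assms M] by blast
    then show ?thesis using valuation_ring_localization_Inter[OF assms(1,3)] by blast
  qed
  ultimately show "is_pruefer (\<Inter>\<V>)" unfolding is_pruefer_def by blast
  show "is_semilocal (\<Inter>\<V>)" by (rule semilocal_Inter_valuation_rings[OF assms])
qed

lemma exists_pruefer_semilocal_avoiding:
  assumes R: "is_subring R" and ic: "is_integrally_closed R"
    and fin: "finite G" and GR: "G \<inter> R = {}"
  obtains S where "R \<subseteq> S" "G \<inter> S = {}" "is_pruefer S" "is_semilocal S"
proof -
  have "\<forall>g\<in>G. \<exists>V. is_valuation_ring V \<and> R \<subseteq> V \<and> g \<notin> V"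
    using valuation_ring_exists[OF R ic] GR by (metis disjoint_iff)
  then obtain V where V: "\<And>g. g \<in> G \<Longrightarrow> is_valuation_ring (V g) \<and> R \<subseteq> V g \<and> g \<notin> V g"
    by metis
  define \<V> where "\<V> = insert UNIV (V ` G)" \<comment> \<open>nonempty even if \<open>G = {}\<close>\<close>
  have val: "\<And>W. W \<in> \<V> \<Longrightarrow> is_valuation_ring W" using V is_valuation_ring_UNIV \<V>_def by auto
  show thesis
  proof (rule that)
    show "is_pruefer (\<Inter>\<V>)" "is_semilocal (\<Inter>\<V>)"
      using pruefer_semilocal_Inter_valuation_rings[of \<V>] fin val unfolding \<V>_def by auto
    show "R \<subseteq> \<Inter>\<V>" "G \<inter> \<Inter>\<V> = {}" using V unfolding \<V>_def by auto
  qed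
qed

section \<open>Pruefer domains are integrally closed\<close>

lemma valuation_ring_integrally_closed:
  assumes V: "is_valuation_ring V"
  shows "is_integrally_closed V"
  unfolding is_integrally_closed_def
proof (intro allI impI)
  fix p :: "'a poly" and x :: 'a
  assume p: "lead_coeff p = 1 \<and> (\<forall>i. coeff p i \<in> V) \<and> poly p x = 0"
  have S: "is_subring V" using V by (rule is_valuation_ringD)
  show "x \<in> V"
  proof (rule ccontr)
    assume xV: "x \<notin> V"
    then have x0: "x \<noteq> 0" using is_subringD(1)[OF S] by auto
    define z where "z = inverse x"
    have zV: "z \<in> V" using valuation_ring_mem_or_inverse[OF V x0] xV z_def by auto
    obtain a q where rq: "reflect_poly p = pCons a q" by (rule pCons_cases)
    have "a = 1" using p rq by (metis coeff_0_reflect_poly coeff_pCons_0)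
    have "coeff q i \<in> V" for i
      using p rq is_subringD(1)[OF S] by (metis coeff_pCons_Suc coeff_reflect_poly)
    then have qz: "poly q z \<in> V" by (rule poly_in_subring[OF S _ zV])
    have "1 + z * poly q z = z ^ degree p * poly p x"
      using rq \<open>a = 1\<close> poly_reflect_poly_nz[of z p] x0 unfolding z_def by simp
    then have "1 + z * poly q z = 0" using p by simp
    then have "x = - poly q z" unfolding z_def using x0 by (simp add: field_simps add_eq_0_iff)
    then show False using xV is_subringD(5)[OF S qz] by simp
  qed
qed

text \<open>The ideal \<open>{r \<in> R. r x \<in> R}\<close> is proper if \<open>x \<notin> R\<close>, but \<open>x\<close> lies in the localization at
  any maximal ideal containing it, which puts a denominator of \<open>x\<close> into the ideal.\<close>

lemma pruefer_integrally_closed: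
  assumes P: "is_pruefer R"
  shows "is_integrally_closed R"
  unfolding is_integrally_closed_def
proof (intro allI impI)
  fix p :: "'a poly" and x :: 'a
  assume p: "lead_coeff p = 1 \<and> (\<forall>i. coeff p i \<in> R) \<and> poly p x = 0"
  have R: "is_subring R" using P by (simp add: is_pruefer_def)
  show "x \<in> R"
  proof (rule ccontr)
    assume xR: "x \<notin> R"
    define I where "I = {r \<in> R. r * x \<in> R}"
    have I: "is_ideal_of R I"
      unfolding is_ideal_of_def I_def
      using is_subringD[OF R] by (auto simp: distrib_right mult.assoc)
    have "1 \<notin> I" using xR I_def by auto
    then obtain M where M: "is_maximal_ideal_of R M" "I \<subseteq> M"
      using exists_maximal_ideal[OF R I] by blast
    have M1: "1 \<notin> M" using maximal_ideal_one_notin[OF M(1)] .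
    have "is_valuation_ring (localization_at R M)" using P M(1) unfolding is_pruefer_def by blast
    then have "x \<in> localization_at R M"
      using valuation_ring_integrally_closed subset_localization[OF R M1] p
      unfolding is_integrally_closed_def by blast
    then obtain a s where as: "x = a / s" "a \<in> R" "s \<in> R" "s \<notin> M"
      unfolding localization_at_def by blast
    have "s \<noteq> 0" using as(4) M(1) is_ideal_ofD(2) unfolding is_maximal_ideal_of_def by blast
    then have "s \<in> I" using as unfolding I_def by simp
    then show False using M(2) as(4) by blast
  qed
qed

section \<open>Zariski and constructible topologies on overrings\<close>

abbreviation overrings_containing :: "'a::field set \<Rightarrow> 'a set \<Rightarrow> 'a set set" where
  "overrings_containing D F \<equiv> {R \<in> overrings D. F \<subseteq> R}"

lemma openin_zariski_overrings_containing:
  "finite F \<Longrightarrow> openin (zariski_overrings D) (overrings_containing D F)"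
  unfolding zariski_overrings_def by (rule topology_generated_by_Basis) blast

lemma topspace_zariski_overrings: "topspace (zariski_overrings D) = overrings D"
  using openin_subset[OF openin_zariski_overrings_containing[of "{}" D]]
  by (auto simp: zariski_overrings_def)

lemma openin_zariski_overrings_nhd:
  assumes "openin (zariski_overrings D) U" "R \<in> U"
  obtains F where "finite F" "F \<subseteq> R" "overrings_containing D F \<subseteq> U"
proof -
  have "generate_topology_on {overrings_containing D F | F. finite F} U"
    using assms(1) unfolding zariski_overrings_def openin_topology_generated_by_iff .
  then have "\<forall>R\<in>U. \<exists>F. finite F \<and> F \<subseteq> R \<and> overrings_containing D F \<subseteq> U"
  proof (induction rule: generate_topology_on.induct)
    case (Int a b)
    show ?case
    proof
      fix R assume R: "R \<in> a \<inter> b"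
      obtain F1 where "finite F1" "F1 \<subseteq> R" "overrings_containing D F1 \<subseteq> a"
        using bspec[OF Int.IH(1) IntD1[OF R]] by (elim exE conjE)
      moreover obtain F2 where "finite F2" "F2 \<subseteq> R" "overrings_containing D F2 \<subseteq> b"
        using bspec[OF Int.IH(2) IntD2[OF R]] by (elim exE conjE)
      ultimately show "\<exists>F. finite F \<and> F \<subseteq> R \<and> overrings_containing D F \<subseteq> a \<inter> b"
        by (intro exI[of _ "F1 \<union> F2"]) auto
    qed
  next
    case (UN K)
    show ?case
    proof
      fix R assume "R \<in> \<Union>K"
      then obtain k where k: "k \<in> K" "R \<in> k" by (rule UnionE)
      obtain F where "finite F" "F \<subseteq> R" "overrings_containing D F \<subseteq> k"
        using bspec[OF UN.IH[OF k(1)] k(2)] by (elim exE conjE)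
      with k(1) show "\<exists>F. finite F \<and> F \<subseteq> R \<and> overrings_containing D F \<subseteq> \<Union>K"
        by (intro exI[of _ F]) auto
    qed
  next
    case (Basis s)
    then obtain F where "finite F" "s = overrings_containing D F" by blast
    then show ?case by auto
  qed simp
  then show thesis using assms(2) that by blast
qed

lemma compactin_zariski_overrings_containing:
  "compactin (zariski_overrings D) (overrings_containing D F)"
  unfolding compactin_def
proof (intro conjI allI impI)
  show "overrings_containing D F \<subseteq> topspace (zariski_overrings D)"
    by (auto simp: topspace_zariski_overrings)
  fix \<U> assume "(\<forall>U\<in>\<U>. openin (zariski_overrings D) U) \<and> overrings_containing D F \<subseteq> \<Union>\<U>"
  then have opens: "\<And>U. U \<in> \<U> \<Longrightarrow> openin (zariski_overrings D) U"
    and cover: "overrings_containing D F \<subseteq> \<Union>\<U>" by auto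
  define R0 where "R0 = \<Inter>(overrings_containing D F)"
  have "UNIV \<in> overrings_containing D F" unfolding overrings_def by (simp add: is_subring_UNIV)
  then have "is_subring R0"
    unfolding R0_def by (intro subring_Inter) (auto simp: overrings_def)
  then have "R0 \<in> overrings_containing D F" unfolding R0_def overrings_def by auto
  then have "R0 \<in> \<Union>\<U>" using cover by (rule subsetD[rotated])
  then obtain U where U: "U \<in> \<U>" "R0 \<in> U" by (rule UnionE)
  obtain F' where F': "finite F'" "F' \<subseteq> R0" "overrings_containing D F' \<subseteq> U"
    by (rule openin_zariski_overrings_nhd[OF opens[OF U(1)] U(2)])
  have "overrings_containing D F \<subseteq> U"
  proof
    fix S assume S: "S \<in> overrings_containing D F"
    then have "R0 \<subseteq> S" unfolding R0_def by (rule Inter_lower)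
    then have "S \<in> overrings_containing D F'" using S F'(2) by auto
    with F'(3) show "S \<in> U" by (rule subsetD)
  qed
  with U(1) show "\<exists>\<F>. finite \<F> \<and> \<F> \<subseteq> \<U> \<and> overrings_containing D F \<subseteq> \<Union>\<F>"
    by (intro exI[of _ "{U}"]) auto
qed

lemma compact_open_zariski_overrings_finite_union:
  assumes U: "openin (zariski_overrings D) U" "compactin (zariski_overrings D) U"
  obtains \<F> where "finite \<F>" "\<And>F. F \<in> \<F> \<Longrightarrow> finite F" "U = (\<Union>F\<in>\<F>. overrings_containing D F)"
proof -
  define \<A> where "\<A> = {F. finite F \<and> overrings_containing D F \<subseteq> U}"
  have "U \<subseteq> \<Union>(overrings_containing D ` \<A>)"
  proof
    fix R assume R: "R \<in> U"
    obtain F where F: "finite F" "F \<subseteq> R" "overrings_containing D F \<subseteq> U"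
      by (rule openin_zariski_overrings_nhd[OF U(1) R])
    have "R \<in> overrings D"
      using subsetD[OF openin_subset[OF U(1)] R] by (simp add: topspace_zariski_overrings)
    then have "R \<in> overrings_containing D F" using F(2) by simp
    moreover have "F \<in> \<A>" using F(1,3) unfolding \<A>_def by simp
    ultimately show "R \<in> \<Union>(overrings_containing D ` \<A>)" by (intro UN_I)
  qed
  moreover have "\<forall>W\<in>overrings_containing D ` \<A>. openin (zariski_overrings D) W"
    using openin_zariski_overrings_containing unfolding \<A>_def by auto
  ultimately obtain \<W> where \<W>: "finite \<W>" "\<W> \<subseteq> overrings_containing D ` \<A>" "U \<subseteq> \<Union>\<W>"
    using U(2)[unfolded compactin_def, THEN conjunct2, THEN spec, of "overrings_containing D ` \<A>"]
    by (elim impE exE conjE) auto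
  obtain \<F> where \<F>: "\<F> \<subseteq> \<A>" "finite \<F>" "\<W> = overrings_containing D ` \<F>"
    using finite_subset_image[OF \<W>(1,2)] by (elim exE conjE)
  show thesis
  proof (rule that[OF \<F>(2)])
    show "finite F" if "F \<in> \<F>" for F using subsetD[OF \<F>(1) that] unfolding \<A>_def by simp
    show "U = (\<Union>F\<in>\<F>. overrings_containing D F)"
    proof (rule antisym)
      show "U \<subseteq> (\<Union>F\<in>\<F>. overrings_containing D F)" using \<W>(3) unfolding \<F>(3) .
      show "(\<Union>F\<in>\<F>. overrings_containing D F) \<subseteq> U"
        using subsetD[OF \<F>(1)] unfolding \<A>_def by (intro UN_least) simp
    qed
  qed
qed

definition constructible_subbasis :: "'a::field set \<Rightarrow> 'a set set set" where
  "constructible_subbasis D =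
     {U. openin (zariski_overrings D) U \<and> compactin (zariski_overrings D) U} \<union>
     {topspace (zariski_overrings D) - U | U.
        openin (zariski_overrings D) U \<and> compactin (zariski_overrings D) U}"

lemma constructible_overrings_eq:
  "constructible_overrings D = topology_generated_by (constructible_subbasis D)"
  unfolding constructible_overrings_def constructible_subbasis_def ..

lemma topspace_constructible_overrings: "topspace (constructible_overrings D) = overrings D"
proof -
  have "overrings D = overrings_containing D {}" by simp
  then have "openin (zariski_overrings D) (overrings D)"
    "compactin (zariski_overrings D) (overrings D)"
    using openin_zariski_overrings_containing[of "{}" D]
      compactin_zariski_overrings_containing[of D "{}"]
    by simp_all
  then show ?thesis
    unfolding constructible_overrings_eq constructible_subbasis_def topology_generated_by_topspace
    using openin_subset[of "zariski_overrings D"] by (auto simp: topspace_zariski_overrings)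
qed

lemma openin_constructible_overrings:
  assumes "openin (zariski_overrings D) U" "compactin (zariski_overrings D) U"
  shows "openin (constructible_overrings D) U"
    "openin (constructible_overrings D) (overrings D - U)"
  using assms
  unfolding constructible_overrings_eq constructible_subbasis_def topspace_zariski_overrings
  by (auto intro: topology_generated_by_Basis)

lemma closedin_integrally_closed_overrings:
  "closedin (constructible_overrings D) {R \<in> overrings D. is_integrally_closed R}"
proof -
  define W where "W p x =
      overrings_containing D (range (coeff p)) \<inter> (overrings D - overrings_containing D {x})"
    for p :: "'a poly" and x
  have "overrings D - {R \<in> overrings D. is_integrally_closed R} =
      (\<Union>(p, x) \<in> {(p, x). lead_coeff p = 1 \<and> poly p x = 0}. W p x)"
    unfolding W_def is_integrally_closed_def by (auto simp: image_subset_iff)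
  moreover have "openin (constructible_overrings D) (W p x)" for p x
    unfolding W_def
    by (intro openin_Int openin_constructible_overrings openin_zariski_overrings_containing
        compactin_zariski_overrings_containing) (simp_all add: range_coeff)
  ultimately have
    "openin (constructible_overrings D) (overrings D - {R \<in> overrings D. is_integrally_closed R})"
    by auto
  then show ?thesis unfolding closedin_def topspace_constructible_overrings by auto
qed

definition constructible_basic :: "'a::field set \<Rightarrow> 'a set \<Rightarrow> 'a set \<Rightarrow> 'a set set" where
  "constructible_basic D F G = {S \<in> overrings D. F \<subseteq> S \<and> G \<inter> S = {}}"

lemma constructible_basic_Int:
  "constructible_basic D F1 G1 \<inter> constructible_basic D F2 G2 =
     constructible_basic D (F1 \<union> F2) (G1 \<union> G2)"
  unfolding constructible_basic_def by auto

lemma constructible_basic_in_complement: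
  assumes U: "openin (zariski_overrings D) U" "compactin (zariski_overrings D) U"
    and R: "R \<in> overrings D" "R \<notin> U"
  obtains G where "finite G" "R \<in> constructible_basic D {} G"
    "constructible_basic D {} G \<subseteq> overrings D - U"
proof -
  obtain \<F> where \<F>: "finite \<F>" "U = (\<Union>F\<in>\<F>. overrings_containing D F)"
    by (rule compact_open_zariski_overrings_finite_union[OF U]) blast
  have "\<forall>F\<in>\<F>. \<exists>g. g \<in> F \<and> g \<notin> R"
    using R \<F>(2) by blast
  then obtain g where g: "\<And>F. F \<in> \<F> \<Longrightarrow> g F \<in> F \<and> g F \<notin> R" by metis
  show thesis
  proof (rule that[of "g ` \<F>"])
    show "finite (g ` \<F>)" using \<F>(1) by simp
    show "R \<in> constructible_basic D {} (g ` \<F>)"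
      using R(1) g unfolding constructible_basic_def by auto
    show "constructible_basic D {} (g ` \<F>) \<subseteq> overrings D - U"
      using g unfolding constructible_basic_def \<F>(2) by auto
  qed
qed

lemma constructible_basic_nhd_subbasis:
  assumes "s \<in> constructible_subbasis D" "R \<in> s"
  obtains F G where "finite F" "finite G" "R \<in> constructible_basic D F G"
    "constructible_basic D F G \<subseteq> s"
  using assms(1) unfolding constructible_subbasis_def
proof (elim UnE CollectE exE conjE)
  assume s: "openin (zariski_overrings D) s"
  obtain F where F: "finite F" "F \<subseteq> R" "overrings_containing D F \<subseteq> s"
    by (rule openin_zariski_overrings_nhd[OF s assms(2)])
  have "R \<in> overrings D"
    using subsetD[OF openin_subset[OF s] assms(2)] by (simp add: topspace_zariski_overrings)
  with F show thesis by (intro that[of F "{}"]) (auto simp: constructible_basic_def)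
next
  fix U assume U: "s = topspace (zariski_overrings D) - U"
    "openin (zariski_overrings D) U" "compactin (zariski_overrings D) U"
  then have "R \<in> overrings D" "R \<notin> U" using assms(2) by (simp_all add: topspace_zariski_overrings)
  then obtain G where "finite G" "R \<in> constructible_basic D {} G"
    "constructible_basic D {} G \<subseteq> overrings D - U"
    by (rule constructible_basic_in_complement[OF U(2,3)])
  then show thesis using U(1) by (intro that[of "{}" G]) (simp_all add: topspace_zariski_overrings)
qed

lemma constructible_basic_nhd:
  assumes "openin (constructible_overrings D) T" "R \<in> T"
  obtains F G where "finite F" "finite G" "R \<in> constructible_basic D F G"
    "constructible_basic D F G \<subseteq> T"
proof -
  have "generate_topology_on (constructible_subbasis D) T"
    using assms(1) unfolding constructible_overrings_eq openin_topology_generated_by_iff .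
  then have "\<forall>R\<in>T. \<exists>F G. finite F \<and> finite G \<and> R \<in> constructible_basic D F G \<and>
      constructible_basic D F G \<subseteq> T"
  proof (induction rule: generate_topology_on.induct)
    case (Int a b)
    show ?case
    proof
      fix R assume R: "R \<in> a \<inter> b"
      obtain F1 G1 where 1: "finite F1" "finite G1" "R \<in> constructible_basic D F1 G1"
          "constructible_basic D F1 G1 \<subseteq> a"
        using bspec[OF Int.IH(1) IntD1[OF R]] by (elim exE conjE)
      obtain F2 G2 where 2: "finite F2" "finite G2" "R \<in> constructible_basic D F2 G2"
          "constructible_basic D F2 G2 \<subseteq> b"
        using bspec[OF Int.IH(2) IntD2[OF R]] by (elim exE conjE)
      have "R \<in> constructible_basic D (F1 \<union> F2) (G1 \<union> G2)"
        "constructible_basic D (F1 \<union> F2) (G1 \<union> G2) \<subseteq> a \<inter> b"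
        using 1(3,4) 2(3,4) unfolding constructible_basic_Int[symmetric] by auto
      with 1(1,2) 2(1,2) show "\<exists>F G. finite F \<and> finite G \<and> R \<in> constructible_basic D F G \<and>
          constructible_basic D F G \<subseteq> a \<inter> b"
        by (intro exI[of _ "F1 \<union> F2"] exI[of _ "G1 \<union> G2"]) simp
    qed
  next
    case (UN K)
    show ?case
    proof
      fix R assume "R \<in> \<Union>K"
      then obtain k where k: "k \<in> K" "R \<in> k" by (rule UnionE)
      obtain F G where "finite F" "finite G" "R \<in> constructible_basic D F G"
          "constructible_basic D F G \<subseteq> k"
        using bspec[OF UN.IH[OF k(1)] k(2)] by (elim exE conjE)
      with k(1) show "\<exists>F G. finite F \<and> finite G \<and> R \<in> constructible_basic D F G \<and>
          constructible_basic D F G \<subseteq> \<Union>K"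
        by (intro exI[of _ F] exI[of _ G]) auto
    qed
  next
    case (Basis s)
    show ?case
    proof
      fix R assume "R \<in> s"
      with Basis obtain F G where "finite F" "finite G" "R \<in> constructible_basic D F G"
          "constructible_basic D F G \<subseteq> s"
        by (rule constructible_basic_nhd_subbasis)
      then show "\<exists>F G. finite F \<and> finite G \<and> R \<in> constructible_basic D F G \<and>
          constructible_basic D F G \<subseteq> s"
        by (intro exI conjI)
    qed
  qed simp
  from bspec[OF this assms(2)] show thesis by (elim exE conjE) (rule that)
qed

lemma constructible_basic_meets_pruefer_semilocal:
  assumes R: "R \<in> constructible_basic D F G" "is_integrally_closed R" and G: "finite G"
  obtains S where "S \<in> constructible_basic D F G" "is_pruefer S" "is_semilocal S"
proof -
  have "is_subring R" "D \<subseteq> R" "F \<subseteq> R" "G \<inter> R = {}"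
    using R(1) unfolding constructible_basic_def overrings_def by auto
  then obtain S where S: "R \<subseteq> S" "G \<inter> S = {}" "is_pruefer S" "is_semilocal S"
    using exists_pruefer_semilocal_avoiding[OF _ R(2) G] by metis
  then have "S \<in> constructible_basic D F G"
    using \<open>D \<subseteq> R\<close> \<open>F \<subseteq> R\<close> unfolding constructible_basic_def overrings_def is_pruefer_def by auto
  then show thesis using S(3,4) by (rule that)
qed

theorem proposition6p1:
  fixes D :: "'a::field set"
  assumes "is_subring D" and "is_quotient_field_of D"
  shows "(constructible_overrings D) closure_of
           {R \<in> overrings D. is_pruefer R \<and> is_semilocal R}
         = {R \<in> overrings D. is_integrally_closed R}"
proof (rule antisym)
  show "constructible_overrings D closure_of {R \<in> overrings D. is_pruefer R \<and> is_semilocal R}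
      \<subseteq> {R \<in> overrings D. is_integrally_closed R}"
    using closedin_integrally_closed_overrings pruefer_integrally_closed
    by (intro closure_of_minimal) auto
  show "{R \<in> overrings D. is_integrally_closed R}
      \<subseteq> constructible_overrings D closure_of {R \<in> overrings D. is_pruefer R \<and> is_semilocal R}"
  proof
    fix R assume R: "R \<in> {R \<in> overrings D. is_integrally_closed R}"
    show "R \<in> constructible_overrings D closure_of {R \<in> overrings D. is_pruefer R \<and> is_semilocal R}"
      unfolding in_closure_of topspace_constructible_overrings
    proof (intro conjI allI impI)
      fix T assume "R \<in> T \<and> openin (constructible_overrings D) T"
      then obtain F G where FG: "finite G" "R \<in> constructible_basic D F G"
          "constructible_basic D F G \<subseteq> T"
        using constructible_basic_nhd by metis
      obtain S where "S \<in> constructible_basic D F G" "is_pruefer S" "is_semilocal S"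
        using constructible_basic_meets_pruefer_semilocal[OF FG(2) _ FG(1)] R by blast
      with FG(3) show "\<exists>S. S \<in> {R \<in> overrings D. is_pruefer R \<and> is_semilocal R} \<and> S \<in> T"
        unfolding constructible_basic_def by blast
    qed (use R in simp)
  qed
qed

end
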